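(* Let $\lambda_0 \geq 0 > \lambda_1$ be real numbers and let $z_1, z_2, z_3$ be complex numbers with $z_j = a_j + b_j i$, $a_j \in \mathbb{R}$, $b_j > 0$ for $j = 1, 2, 3$. If $\lambda_0 + \lambda_1 - 2\sum_{j=1}^3 |z_j| \geq 0$, then there is an $8 \times 8$ normal centrosymmetric nonnegative matrix with eigenvalues $\lambda_0, \lambda_1, z_1, z_2, z_3, \overline{z}_1, \overline{z}_2, \overline{z}_3$.
   Context: $J$ is the $8 \times 8$ reverse identity matrix (ones on the anti-diagonal, zeros elsewhere). A matrix $Q$ is centrosymmetric if $JQJ = Q$, nonnegative if all entries are nonnegative, and normal if $QQ^* = Q^*Q$. *)

theory Defs
  imports "Jordan_Normal_Form.Char_Poly"
begin

definition rev_id_mat :: "nat \<Rightarrow> 'a :: {zero,one} mat" where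
  "rev_id_mat n = mat n n (\<lambda>(i,j). if i + j = n - 1 then 1 else 0)"

definition centrosymmetric :: "'a :: semiring_1 mat \<Rightarrow> bool" where
  "centrosymmetric Q \<longleftrightarrow> rev_id_mat (dim_row Q) * Q * rev_id_mat (dim_row Q) = Q"

definition nonneg_mat :: "real mat \<Rightarrow> bool" where
  "nonneg_mat Q \<longleftrightarrow> (\<forall>i < dim_row Q. \<forall>j < dim_col Q. Q $$ (i,j) \<ge> 0)"

(* normality of a real matrix: Q Q^* = Q^* Q, where Q^* = Q^T for real Q *)
definition normal_real_mat :: "real mat \<Rightarrow> bool" where
  "normal_real_mat Q \<longleftrightarrow> Q * transpose_mat Q = transpose_mat Q * Q"

(* the (complex) eigenvalues of Q, listed with algebraic multiplicity, are exactly the list ms *)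
definition has_eigenvalues :: "real mat \<Rightarrow> complex list \<Rightarrow> bool" where
  "has_eigenvalues Q ms \<longleftrightarrow>
     char_poly (map_mat complex_of_real Q) = (\<Prod>\<mu>\<leftarrow>ms. [:- \<mu>, 1:])"

end

theory Submission
  imports Defs
begin

(* Let H be the 8 x 8 Sylvester-Hadamard matrix, H(i,j) = (-1)^(number of common 1-bits of i
   and j); it is symmetric with H H = 8 I. Let D be the real block-diagonal matrix with diagonal
   entries l0, l1 and the rotation blocks [[a_j, b_j], [-b_j, a_j]] for z_j = a_j + b_j i, and put
   Q = H D H / 8. Then Q is similar to D, whose eigenvalues are l0, l1, z_j and their conjugates,
   and Q is normal because D is. Reversing the order of rows and columns maps i to 7 - i, which
   multiplies column k of H by H(7,k); placing each block inside a class of equal H(7,k) makes Q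
   centrosymmetric. Finally 8 Q(r,s) = l0 +- l1 + (three terms, the j-th of absolute value at most
   2 |z_j|), which is nonnegative under the hypothesis l0 + l1 >= 2 (|z1| + |z2| + |z3|). *)

lemma smult_smult_mat: "a \<cdot>\<^sub>m (b \<cdot>\<^sub>m A) = (a * b :: 'a :: semigroup_mult) \<cdot>\<^sub>m A"
  by (rule eq_matI) (auto simp: mult.assoc)

lemma one_smult_mat [simp]: "(1 :: 'a :: monoid_mult) \<cdot>\<^sub>m A = A"
  by (rule eq_matI) auto

lemma transpose_smult_mat: "transpose_mat (k \<cdot>\<^sub>m A) = k \<cdot>\<^sub>m transpose_mat A"
  by (rule eq_matI) auto

lemma map_mat_of_real_smult: "map_mat of_real (k \<cdot>\<^sub>m A) = of_real k \<cdot>\<^sub>m map_mat of_real A"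
  by (rule eq_matI) auto

lemma index_mult_mat_3:
  assumes "A \<in> carrier_mat n n" "B \<in> carrier_mat n n" "C \<in> carrier_mat n n" "i < n" "j < n"
  shows "(A * B * C) $$ (i, j) = (\<Sum>l<n. \<Sum>k<n. A $$ (i, l) * B $$ (l, k) * C $$ (k, j))"
  using assms by (simp add: scalar_prod_def lessThan_atLeast0 sum_distrib_left mult.assoc)

lemma rev_id_mat_carrier [simp]: "rev_id_mat n \<in> carrier_mat n n"
  and dim_rev_id_mat [simp]: "dim_row (rev_id_mat n) = n" "dim_col (rev_id_mat n) = n"
  by (simp_all add: rev_id_mat_def)

lemma index_rev_id_mat_mult:
  fixes A :: "'a :: semiring_1 mat"
  assumes "A \<in> carrier_mat n nc" "i < n" "j < nc"
  shows "(rev_id_mat n * A) $$ (i, j) = A $$ (n - 1 - i, j)"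
proof -
  have "(rev_id_mat n * A) $$ (i, j) = (\<Sum>k = 0..<n. (if i + k = n - 1 then 1 else 0) * A $$ (k, j))"
    using assms by (simp add: scalar_prod_def rev_id_mat_def)
  also have "\<dots> = (\<Sum>k = 0..<n. if k = n - 1 - i then A $$ (k, j) else 0)"
    using assms(2) by (intro sum.cong) auto
  finally show ?thesis
    using assms(2) by simp
qed

lemma index_mult_rev_id_mat:
  fixes A :: "'a :: semiring_1 mat"
  assumes "A \<in> carrier_mat nr n" "i < nr" "j < n"
  shows "(A * rev_id_mat n) $$ (i, j) = A $$ (i, n - 1 - j)"
proof -
  have "(A * rev_id_mat n) $$ (i, j) = (\<Sum>k = 0..<n. A $$ (i, k) * (if k + j = n - 1 then 1 else 0))"
    using assms by (simp add: scalar_prod_def rev_id_mat_def)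
  also have "\<dots> = (\<Sum>k = 0..<n. if k = n - 1 - j then A $$ (i, k) else 0)"
    using assms(3) by (intro sum.cong) auto
  finally show ?thesis
    using assms(3) by simp
qed

lemma centrosymmetric_iff:
  fixes A :: "'a :: semiring_1 mat"
  assumes A: "A \<in> carrier_mat n n"
  shows "centrosymmetric A \<longleftrightarrow> (\<forall>i < n. \<forall>j < n. A $$ (n - 1 - i, n - 1 - j) = A $$ (i, j))"
proof -
  have "(rev_id_mat n * A * rev_id_mat n) $$ (i, j) = A $$ (n - 1 - i, n - 1 - j)"
    if "i < n" "j < n" for i j
  proof -
    have "(rev_id_mat n * A * rev_id_mat n) $$ (i, j) = (rev_id_mat n * A) $$ (i, n - 1 - j)"
      using that mult_carrier_mat[OF rev_id_mat_carrier A] by (intro index_mult_rev_id_mat) auto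
    also have "\<dots> = A $$ (n - 1 - i, n - 1 - j)"
      using that A by (intro index_rev_id_mat_mult) auto
    finally show ?thesis .
  qed
  then show ?thesis
    using A unfolding centrosymmetric_def by (auto simp: mat_eq_iff)
qed

lemma mult_conj_scaled_involution:
  fixes H X Y :: "'a :: comm_ring_1 mat"
  assumes H: "H \<in> carrier_mat n n" and HH: "H * H = c \<cdot>\<^sub>m 1\<^sub>m n"
    and X: "X \<in> carrier_mat n n" and Y: "Y \<in> carrier_mat n n"
  shows "(H * X * H) * (H * Y * H) = c \<cdot>\<^sub>m (H * (X * Y) * H)"
proof -
  have "(H * X * H) * (H * Y * H) = H * X * (H * H) * Y * H"
    using H X Y by (simp add: assoc_mult_mat[of _ n n _ n _ n])
  also have "\<dots> = c \<cdot>\<^sub>m (H * (X * Y) * H)"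
    using H X Y by (simp add: HH mult_smult_distrib[of _ n n _ n] mult_smult_assoc_mat[of _ n n _ n]
        assoc_mult_mat[of _ n n _ n _ n])
  finally show ?thesis .
qed

lemma conj_scaled_involution_normal:
  fixes H D :: "'a :: comm_ring_1 mat" and k :: 'a
  assumes H: "H \<in> carrier_mat n n" and HT: "transpose_mat H = H" and HH: "H * H = c \<cdot>\<^sub>m 1\<^sub>m n"
    and D: "D \<in> carrier_mat n n" and normal: "D * transpose_mat D = transpose_mat D * D"
  defines "Q \<equiv> k \<cdot>\<^sub>m (H * D * H)"
  shows "Q * transpose_mat Q = transpose_mat Q * Q"
proof -
  have DT: "transpose_mat D \<in> carrier_mat n n"
    using D by simp
  have QT: "transpose_mat Q = k \<cdot>\<^sub>m (H * transpose_mat D * H)"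
    using H D by (simp add: Q_def transpose_smult_mat transpose_mult[of _ n n _ n] HT
        assoc_mult_mat[of _ n n _ n _ n])
  have "Q * transpose_mat Q = (k * k) \<cdot>\<^sub>m ((H * D * H) * (H * transpose_mat D * H))"
    unfolding QT unfolding Q_def using H D DT
    by (simp add: mult_smult_distrib[of _ n n _ n] mult_smult_assoc_mat[of _ n n _ n] smult_smult_mat)
  also have "\<dots> = (k * k) \<cdot>\<^sub>m ((H * transpose_mat D * H) * (H * D * H))"
    by (simp add: mult_conj_scaled_involution[OF H HH] D DT normal)
  also have "\<dots> = transpose_mat Q * Q"
    unfolding QT unfolding Q_def using H D DT
    by (simp add: mult_smult_distrib[of _ n n _ n] mult_smult_assoc_mat[of _ n n _ n] smult_smult_mat)
  finally show ?thesis .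
qed

lemma similar_mat_conj_scaled_involution:
  fixes H D :: "'a :: field mat"
  assumes H: "H \<in> carrier_mat n n" and HH: "H * H = c \<cdot>\<^sub>m 1\<^sub>m n" and "c \<noteq> 0"
    and D: "D \<in> carrier_mat n n"
  shows "similar_mat ((1 / c) \<cdot>\<^sub>m (H * D * H)) D"
proof (rule similar_matI[where P = H and Q = "(1 / c) \<cdot>\<^sub>m H" and n = n])
  show "{(1 / c) \<cdot>\<^sub>m (H * D * H), D, H, (1 / c) \<cdot>\<^sub>m H} \<subseteq> carrier_mat n n"
    using H D by auto
  show "H * ((1 / c) \<cdot>\<^sub>m H) = 1\<^sub>m n" "(1 / c) \<cdot>\<^sub>m H * H = 1\<^sub>m n"
    using H \<open>c \<noteq> 0\<close> by (simp_all add: mult_smult_distrib[of _ n n _ n]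
        mult_smult_assoc_mat[of _ n n _ n] HH smult_smult_mat)
  show "(1 / c) \<cdot>\<^sub>m (H * D * H) = H * D * ((1 / c) \<cdot>\<^sub>m H)"
    using H D by (simp add: mult_smult_distrib[of _ n n _ n])
qed

lemma char_poly_mat_diag:
  fixes xs :: "'a :: comm_ring_1 list"
  shows "char_poly (mat_diag (length xs) (\<lambda>i. xs ! i)) = (\<Prod>x\<leftarrow>xs. [:- x, 1:])"
proof -
  have "diag_mat (mat_diag (length xs) (\<lambda>i. xs ! i)) = xs"
    by (rule nth_equalityI) (auto simp: diag_mat_def mat_diag_def)
  moreover have "upper_triangular (mat_diag (length xs) (\<lambda>i. xs ! i))"
    by (auto simp: upper_triangular_def mat_diag_def)
  ultimately show ?thesis
    using char_poly_upper_triangular[OF mat_diag_dim] by metis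
qed

lemma sum_lessThan_8: "sum f {..<8 :: nat} = f 0 + f 1 + f 2 + f 3 + f 4 + f 5 + f 6 + f 7"
  by (simp add: eval_nat_numeral add.assoc)

lemma less_8_cases: "(i :: nat) < 8 \<longleftrightarrow> i = 0 \<or> i = 1 \<or> i = 2 \<or> i = 3 \<or> i = 4 \<or> i = 5 \<or> i = 6 \<or> i = 7"
  by auto

lemma index_mult_mat_8:
  assumes "A \<in> carrier_mat 8 8" "B \<in> carrier_mat 8 8" "i < 8" "j < 8"
  shows "(A * B) $$ (i, j) = (\<Sum>k<8. A $$ (i, k) * B $$ (k, j))"
  using assms by (simp add: scalar_prod_def lessThan_atLeast0)

(* The Sylvester-Hadamard sign on three bits; note that 7 - i complements the bits of i < 8. *)
definition walsh :: "nat \<Rightarrow> nat \<Rightarrow> 'a :: comm_ring_1" where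
  "walsh i j = (-1) ^ (i mod 2 * (j mod 2) + i div 2 mod 2 * (j div 2 mod 2)
                       + i div 4 mod 2 * (j div 4 mod 2))"

definition hadamard8 :: "'a :: comm_ring_1 mat" where
  "hadamard8 = mat 8 8 (\<lambda>(i, j). walsh i j)"

lemma walsh_sign: "walsh i j = (1 :: 'a :: comm_ring_1) \<or> walsh i j = -1"
  unfolding walsh_def by (metis neg_one_even_power neg_one_odd_power)

lemma walsh_mult_self [simp]: "walsh i j * walsh i j = 1" "walsh i j * (walsh i j * x) = x"
  by (simp_all add: walsh_def mult.assoc[symmetric] flip: power_mult_distrib)

lemma walsh_zero [simp]: "walsh i 0 = 1" "walsh 0 j = 1"
  by (simp_all add: walsh_def)

lemma walsh_sym: "walsh i j = walsh j i"
  unfolding walsh_def by (simp add: mult.commute)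

lemma walsh_complement:
  assumes "r < 8" "k < 8"
  shows "walsh (7 - r) k = walsh 7 k * walsh r k"
  using assms unfolding less_8_cases by (auto simp: walsh_def)

lemma of_real_walsh [simp]: "of_real (walsh i j) = walsh i j"
  by (simp add: walsh_def)

lemma hadamard8_carrier [simp]: "hadamard8 \<in> carrier_mat 8 8"
  and dim_hadamard8 [simp]: "dim_row hadamard8 = 8" "dim_col hadamard8 = 8"
  by (simp_all add: hadamard8_def)

lemma index_hadamard8 [simp]: "i < 8 \<Longrightarrow> j < 8 \<Longrightarrow> hadamard8 $$ (i, j) = walsh i j"
  by (simp add: hadamard8_def)

lemma transpose_hadamard8: "transpose_mat hadamard8 = hadamard8"
  by (rule eq_matI) (auto simp: hadamard8_def walsh_sym)

lemma hadamard8_squared: "(hadamard8 :: 'a :: comm_ring_1 mat) * hadamard8 = 8 \<cdot>\<^sub>m 1\<^sub>m 8"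
proof (rule eq_matI)
  fix i j assume "i < dim_row ((8 :: 'a) \<cdot>\<^sub>m 1\<^sub>m 8)" "j < dim_col ((8 :: 'a) \<cdot>\<^sub>m 1\<^sub>m 8)"
  then have i: "i < 8" and j: "j < 8" by auto
  show "(hadamard8 * hadamard8) $$ (i, j) = ((8 :: 'a) \<cdot>\<^sub>m 1\<^sub>m 8) $$ (i, j)"
    unfolding index_mult_mat_8[OF hadamard8_carrier hadamard8_carrier i j] sum_lessThan_8
    using i j unfolding less_8_cases by (elim disjE) (simp_all add: walsh_def)
qed auto

lemma of_real_hadamard8: "map_mat of_real hadamard8 = hadamard8"
  by (rule eq_matI) (auto simp: hadamard8_def)

definition block2 :: "nat \<Rightarrow> nat \<Rightarrow> 'a \<Rightarrow> 'a \<Rightarrow> 'a \<Rightarrow> 'a \<Rightarrow> nat \<Rightarrow> nat \<Rightarrow> 'a :: zero" where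
  "block2 p q a b c d i j =
     (if i = p \<and> j = p then a else if i = p \<and> j = q then b
      else if i = q \<and> j = p then c else if i = q \<and> j = q then d else 0)"

definition rotation_block :: "nat \<Rightarrow> nat \<Rightarrow> complex \<Rightarrow> nat \<Rightarrow> nat \<Rightarrow> real" where
  "rotation_block p q z = block2 p q (Re z) (Im z) (- Im z) (Re z)"

(* Each rotation block lies in {0,3,5,6} or in {1,2,4,7}, the classes on which walsh 7 is constant. *)
definition real_normal_form :: "real \<Rightarrow> real \<Rightarrow> complex \<Rightarrow> complex \<Rightarrow> complex \<Rightarrow> real mat" where
  "real_normal_form l0 l1 z1 z2 z3 = mat 8 8 (\<lambda>(i, j).
     if i = 0 \<and> j = 0 then l0 else if i = 3 \<and> j = 3 then l1
     else rotation_block 5 6 z1 i j + rotation_block 1 2 z2 i j + rotation_block 4 7 z3 i j)"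

lemma real_normal_form_carrier [simp]: "real_normal_form l0 l1 z1 z2 z3 \<in> carrier_mat 8 8"
  and dim_real_normal_form [simp]:
    "dim_row (real_normal_form l0 l1 z1 z2 z3) = 8" "dim_col (real_normal_form l0 l1 z1 z2 z3) = 8"
  by (simp_all add: real_normal_form_def)

lemma index_real_normal_form:
  "i < 8 \<Longrightarrow> j < 8 \<Longrightarrow> real_normal_form l0 l1 z1 z2 z3 $$ (i, j) =
     (if i = 0 \<and> j = 0 then l0 else if i = 3 \<and> j = 3 then l1
      else rotation_block 5 6 z1 i j + rotation_block 1 2 z2 i j + rotation_block 4 7 z3 i j)"
  by (simp add: real_normal_form_def)

lemma transpose_real_normal_form:
  "transpose_mat (real_normal_form l0 l1 z1 z2 z3) = real_normal_form l0 l1 (cnj z1) (cnj z2) (cnj z3)"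
proof (rule eq_matI)
  fix i j assume "i < dim_row (real_normal_form l0 l1 (cnj z1) (cnj z2) (cnj z3))"
    "j < dim_col (real_normal_form l0 l1 (cnj z1) (cnj z2) (cnj z3))"
  then show "transpose_mat (real_normal_form l0 l1 z1 z2 z3) $$ (i, j)
      = real_normal_form l0 l1 (cnj z1) (cnj z2) (cnj z3) $$ (i, j)"
    unfolding dim_real_normal_form less_8_cases
    by (elim disjE) (simp_all add: index_real_normal_form rotation_block_def block2_def)
qed auto

lemma real_normal_form_normal:
  "real_normal_form l0 l1 z1 z2 z3 * transpose_mat (real_normal_form l0 l1 z1 z2 z3)
     = transpose_mat (real_normal_form l0 l1 z1 z2 z3) * real_normal_form l0 l1 z1 z2 z3"
  (is "?D * ?DT = ?DT * ?D")
proof (rule eq_matI)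
  fix i j assume "i < dim_row (?DT * ?D)" "j < dim_col (?DT * ?D)"
  then have i: "i < 8" and j: "j < 8" by auto
  have DT: "?DT \<in> carrier_mat 8 8" by simp
  show "(?D * ?DT) $$ (i, j) = (?DT * ?D) $$ (i, j)"
    unfolding index_mult_mat_8[OF real_normal_form_carrier DT i j]
      index_mult_mat_8[OF DT real_normal_form_carrier i j]
    unfolding transpose_real_normal_form sum_lessThan_8
    using i j unfolding less_8_cases
    by (elim disjE) (simp_all add: index_real_normal_form rotation_block_def block2_def algebra_simps)
qed auto

(* The contribution of the block on rows and columns p, q of D to entry (r, s) of H D H. *)
definition rotation_term :: "nat \<Rightarrow> nat \<Rightarrow> complex \<Rightarrow> nat \<Rightarrow> nat \<Rightarrow> real" where
  "rotation_term p q z r s = Re z * (walsh r p * walsh p s + walsh r q * walsh q s)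
     + Im z * (walsh r p * walsh q s - walsh r q * walsh p s)"

definition hadamard_conj :: "real \<Rightarrow> real \<Rightarrow> complex \<Rightarrow> complex \<Rightarrow> complex \<Rightarrow> real mat" where
  "hadamard_conj l0 l1 z1 z2 z3 =
     (1 / 8) \<cdot>\<^sub>m (hadamard8 * real_normal_form l0 l1 z1 z2 z3 * hadamard8)"

lemma hadamard_conj_carrier: "hadamard_conj l0 l1 z1 z2 z3 \<in> carrier_mat 8 8"
  unfolding hadamard_conj_def
  by (intro smult_carrier_mat
      mult_carrier_mat[OF mult_carrier_mat[OF hadamard8_carrier real_normal_form_carrier]
        hadamard8_carrier])

lemma index_hadamard_conj:
  assumes "r < 8" "s < 8"
  shows "hadamard_conj l0 l1 z1 z2 z3 $$ (r, s) = (l0 + l1 * walsh r 3 * walsh 3 s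
    + rotation_term 5 6 z1 r s + rotation_term 1 2 z2 r s + rotation_term 4 7 z3 r s) / 8"
proof -
  have "(hadamard8 * real_normal_form l0 l1 z1 z2 z3 * hadamard8) $$ (r, s)
      = l0 + l1 * walsh r 3 * walsh 3 s
        + rotation_term 5 6 z1 r s + rotation_term 1 2 z2 r s + rotation_term 4 7 z3 r s"
    unfolding index_mult_mat_3[OF hadamard8_carrier real_normal_form_carrier hadamard8_carrier assms]
      sum_lessThan_8
    using assms by (simp add: index_real_normal_form rotation_block_def block2_def rotation_term_def
        algebra_simps)
  then show ?thesis
    using assms by (simp add: hadamard_conj_def)
qed

(* Of the two coefficients one vanishes and the other is +-2. *)
lemma sign_pattern_lower_bound:
  fixes x y u v :: real
  assumes "x = 1 \<or> x = -1" "y = 1 \<or> y = -1" "u = 1 \<or> u = -1" "v = 1 \<or> v = -1"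
  shows "- 2 * cmod z \<le> Re z * (x * u + y * v) + Im z * (x * v - y * u)"
  using assms abs_Re_le_cmod[of z] abs_Im_le_cmod[of z] by (auto simp: abs_le_iff)

lemma rotation_term_lower_bound: "- 2 * cmod z \<le> rotation_term p q z r s"
  unfolding rotation_term_def by (rule sign_pattern_lower_bound; rule walsh_sign)

lemma rotation_term_complement:
  assumes "r < 8" "s < 8" "p < 8" "q < 8" and "walsh 7 p = (walsh 7 q :: real)"
  shows "rotation_term p q z (7 - r) (7 - s) = rotation_term p q z r s"
proof -
  have "walsh i (7 - s) = (walsh 7 i * walsh i s :: real)" if "i < 8" for i :: nat
    using walsh_complement[OF \<open>s < 8\<close> that] by (simp add: walsh_sym[of i] mult.commute)
  then show ?thesis
    using assms by (simp add: rotation_term_def walsh_complement algebra_simps)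
qed

lemma hadamard_conj_nonneg:
  assumes "l1 \<le> 0" and "l0 + l1 - 2 * (cmod z1 + cmod z2 + cmod z3) \<ge> 0"
  shows "nonneg_mat (hadamard_conj l0 l1 z1 z2 z3)"
  unfolding nonneg_mat_def
proof (intro allI impI)
  fix r s
  assume "r < dim_row (hadamard_conj l0 l1 z1 z2 z3)" "s < dim_col (hadamard_conj l0 l1 z1 z2 z3)"
  then have r: "r < 8" and s: "s < 8"
    by (simp_all add: hadamard_conj_def)
  have sign_scale: "l1 \<le> l1 * x * y" if "x = 1 \<or> x = -1" "y = 1 \<or> y = -1" for x y :: real
    using that \<open>l1 \<le> 0\<close> by auto
  have "l1 \<le> l1 * walsh r 3 * walsh 3 s"
    by (rule sign_scale[OF walsh_sign walsh_sign])
  then have "0 \<le> l0 + l1 * walsh r 3 * walsh 3 s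
    + rotation_term 5 6 z1 r s + rotation_term 1 2 z2 r s + rotation_term 4 7 z3 r s"
    using assms(2) rotation_term_lower_bound[of z1 5 6 r s] rotation_term_lower_bound[of z2 1 2 r s]
      rotation_term_lower_bound[of z3 4 7 r s] by argo
  then show "0 \<le> hadamard_conj l0 l1 z1 z2 z3 $$ (r, s)"
    unfolding index_hadamard_conj[OF r s] by (rule divide_nonneg_pos) simp
qed

lemma hadamard_conj_centrosymmetric: "centrosymmetric (hadamard_conj l0 l1 z1 z2 z3)"
  unfolding centrosymmetric_iff[OF hadamard_conj_carrier]
proof (intro allI impI)
  fix r s :: nat assume r: "r < 8" and s: "s < 8"
  have "7 - r < 8" "7 - s < 8" by simp_all
  have "walsh 7 3 = (1 :: real)"
    by (simp add: walsh_def)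
  then have "walsh (7 - r) 3 * walsh 3 (7 - s) = (walsh r 3 * walsh 3 s :: real)"
    using walsh_complement[OF r, of 3, where 'a = real] walsh_complement[OF s, of 3, where 'a = real]
    by (simp add: walsh_sym[of 3])
  moreover have "rotation_term p q z (7 - r) (7 - s) = rotation_term p q z r s"
    if "p < 8" "q < 8" "walsh 7 p = (walsh 7 q :: real)" for p q z
    using rotation_term_complement[OF r s that] .
  moreover have "walsh 7 5 = (walsh 7 6 :: real)" "walsh 7 1 = (walsh 7 2 :: real)"
    "walsh 7 4 = (walsh 7 7 :: real)"
    by (simp_all add: walsh_def)
  ultimately have
    "hadamard_conj l0 l1 z1 z2 z3 $$ (7 - r, 7 - s) = hadamard_conj l0 l1 z1 z2 z3 $$ (r, s)"
    unfolding index_hadamard_conj[OF \<open>7 - r < 8\<close> \<open>7 - s < 8\<close>] index_hadamard_conj[OF r s]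
    by (simp only: mult.assoc)
  then show
    "hadamard_conj l0 l1 z1 z2 z3 $$ (8 - 1 - r, 8 - 1 - s) = hadamard_conj l0 l1 z1 z2 z3 $$ (r, s)"
    by simp
qed

lemma hadamard_conj_normal: "normal_real_mat (hadamard_conj l0 l1 z1 z2 z3)"
  unfolding normal_real_mat_def hadamard_conj_def
  by (rule conj_scaled_involution_normal[OF hadamard8_carrier transpose_hadamard8
        hadamard8_squared real_normal_form_carrier real_normal_form_normal])

(* Columns p and q of each block are the eigenvectors (1, i) and (1, -i) of [[a, b], [-b, a]]. *)
definition rotation_eigvecs :: "complex mat" where
  "rotation_eigvecs = mat 8 8 (\<lambda>(i, j). if i = j \<and> (i = 0 \<or> i = 3) then 1
     else block2 5 6 1 1 \<i> (- \<i>) i j + block2 1 2 1 1 \<i> (- \<i>) i j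
        + block2 4 7 1 1 \<i> (- \<i>) i j)"

definition rotation_eigvecs_inv :: "complex mat" where
  "rotation_eigvecs_inv = mat 8 8 (\<lambda>(i, j). if i = j \<and> (i = 0 \<or> i = 3) then 1
     else block2 5 6 (1 / 2) (- \<i> / 2) (1 / 2) (\<i> / 2) i j
        + block2 1 2 (1 / 2) (- \<i> / 2) (1 / 2) (\<i> / 2) i j
        + block2 4 7 (1 / 2) (- \<i> / 2) (1 / 2) (\<i> / 2) i j)"

definition normal_form_spectrum :: "real \<Rightarrow> real \<Rightarrow> complex \<Rightarrow> complex \<Rightarrow> complex \<Rightarrow> complex list" where
  "normal_form_spectrum l0 l1 z1 z2 z3 = [of_real l0, z2, cnj z2, of_real l1, z3, z1, cnj z1, cnj z3]"

lemma length_normal_form_spectrum: "length (normal_form_spectrum l0 l1 z1 z2 z3) = 8"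
  by (simp add: normal_form_spectrum_def)

lemma rotation_eigvecs_carrier [simp]: "rotation_eigvecs \<in> carrier_mat 8 8"
  and rotation_eigvecs_inv_carrier [simp]: "rotation_eigvecs_inv \<in> carrier_mat 8 8"
  by (simp_all add: rotation_eigvecs_def rotation_eigvecs_inv_def)

lemma dim_rotation_eigvecs [simp]:
  "dim_row rotation_eigvecs = 8" "dim_col rotation_eigvecs = 8"
  "dim_row rotation_eigvecs_inv = 8" "dim_col rotation_eigvecs_inv = 8"
  by (simp_all add: rotation_eigvecs_def rotation_eigvecs_inv_def)

lemma index_rotation_eigvecs:
  "i < 8 \<Longrightarrow> j < 8 \<Longrightarrow> rotation_eigvecs $$ (i, j) = (if i = j \<and> (i = 0 \<or> i = 3) then 1
     else block2 5 6 1 1 \<i> (- \<i>) i j + block2 1 2 1 1 \<i> (- \<i>) i j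
        + block2 4 7 1 1 \<i> (- \<i>) i j)"
  by (simp add: rotation_eigvecs_def)

lemma index_rotation_eigvecs_inv:
  "i < 8 \<Longrightarrow> j < 8 \<Longrightarrow> rotation_eigvecs_inv $$ (i, j) = (if i = j \<and> (i = 0 \<or> i = 3) then 1
     else block2 5 6 (1 / 2) (- \<i> / 2) (1 / 2) (\<i> / 2) i j
        + block2 1 2 (1 / 2) (- \<i> / 2) (1 / 2) (\<i> / 2) i j
        + block2 4 7 (1 / 2) (- \<i> / 2) (1 / 2) (\<i> / 2) i j)"
  by (simp add: rotation_eigvecs_inv_def)

lemma rotation_eigvecs_inverse:
  "rotation_eigvecs * rotation_eigvecs_inv = 1\<^sub>m 8" "rotation_eigvecs_inv * rotation_eigvecs = 1\<^sub>m 8"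
proof -
  have "(rotation_eigvecs * rotation_eigvecs_inv) $$ (i, j) = 1\<^sub>m 8 $$ (i, j)"
    and "(rotation_eigvecs_inv * rotation_eigvecs) $$ (i, j) = 1\<^sub>m 8 $$ (i, j)"
    if "i < 8" "j < 8" for i j
    unfolding index_mult_mat_8[OF rotation_eigvecs_carrier rotation_eigvecs_inv_carrier that]
      index_mult_mat_8[OF rotation_eigvecs_inv_carrier rotation_eigvecs_carrier that] sum_lessThan_8
    using that unfolding less_8_cases
    by (elim disjE; simp add: index_rotation_eigvecs index_rotation_eigvecs_inv block2_def)+
  then show "rotation_eigvecs * rotation_eigvecs_inv = 1\<^sub>m 8"
    "rotation_eigvecs_inv * rotation_eigvecs = 1\<^sub>m 8"
    by (auto simp: mat_eq_iff)
qed

lemma real_normal_form_eigvecs: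
  "map_mat complex_of_real (real_normal_form l0 l1 z1 z2 z3) * rotation_eigvecs
     = rotation_eigvecs * mat_diag 8 (\<lambda>i. normal_form_spectrum l0 l1 z1 z2 z3 ! i)"
  (is "?D * ?P = ?P * ?L")
proof (rule eq_matI)
  have D: "?D \<in> carrier_mat 8 8" and L: "?L \<in> carrier_mat 8 8"
    by simp_all
  fix i j assume "i < dim_row (?P * ?L)" "j < dim_col (?P * ?L)"
  then have i: "i < 8" and j: "j < 8"
    by (simp_all add: mat_diag_def)
  show "(?D * ?P) $$ (i, j) = (?P * ?L) $$ (i, j)"
    unfolding index_mult_mat_8[OF D rotation_eigvecs_carrier i j]
      index_mult_mat_8[OF rotation_eigvecs_carrier L i j] sum_lessThan_8
    using i j unfolding less_8_cases
    by (elim disjE) (simp_all add: index_real_normal_form index_rotation_eigvecs rotation_block_def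
        block2_def mat_diag_def normal_form_spectrum_def complex_eq_iff)
qed (simp_all add: mat_diag_def)

lemma similar_real_normal_form_diag:
  "similar_mat (map_mat complex_of_real (real_normal_form l0 l1 z1 z2 z3))
     (mat_diag 8 (\<lambda>i. normal_form_spectrum l0 l1 z1 z2 z3 ! i))"
  (is "similar_mat ?D ?L")
proof (rule similar_matI[where P = rotation_eigvecs and Q = rotation_eigvecs_inv and n = 8])
  show "{?D, ?L, rotation_eigvecs, rotation_eigvecs_inv} \<subseteq> carrier_mat 8 8"
    by simp
  show "rotation_eigvecs * rotation_eigvecs_inv = 1\<^sub>m 8"
    "rotation_eigvecs_inv * rotation_eigvecs = 1\<^sub>m 8"
    by (fact rotation_eigvecs_inverse)+
  have "?D = ?D * (rotation_eigvecs * rotation_eigvecs_inv)"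
    by (simp add: rotation_eigvecs_inverse)
  also have "\<dots> = rotation_eigvecs * ?L * rotation_eigvecs_inv"
    by (simp add: assoc_mult_mat[of _ 8 8 _ 8 _ 8, symmetric] real_normal_form_eigvecs)
  finally show "?D = rotation_eigvecs * ?L * rotation_eigvecs_inv" .
qed

lemma map_hadamard_conj:
  "map_mat complex_of_real (hadamard_conj l0 l1 z1 z2 z3)
     = (1 / 8 :: complex) \<cdot>\<^sub>m
         (hadamard8 * map_mat complex_of_real (real_normal_form l0 l1 z1 z2 z3) * hadamard8)"
  by (simp add: hadamard_conj_def map_mat_of_real_smult of_real_hadamard8
      of_real_hom.mat_hom_mult[OF mult_carrier_mat[OF hadamard8_carrier real_normal_form_carrier]
        hadamard8_carrier]
      of_real_hom.mat_hom_mult[OF hadamard8_carrier real_normal_form_carrier])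

lemma hadamard_conj_eigenvalues:
  "has_eigenvalues (hadamard_conj l0 l1 z1 z2 z3)
     [of_real l0, of_real l1, z1, z2, z3, cnj z1, cnj z2, cnj z3]"
proof -
  let ?L = "mat_diag 8 (\<lambda>i. normal_form_spectrum l0 l1 z1 z2 z3 ! i)"
  have "similar_mat (map_mat complex_of_real (hadamard_conj l0 l1 z1 z2 z3))
      (map_mat complex_of_real (real_normal_form l0 l1 z1 z2 z3))"
    unfolding map_hadamard_conj
    by (rule similar_mat_conj_scaled_involution[OF hadamard8_carrier hadamard8_squared]) simp_all
  then have "similar_mat (map_mat complex_of_real (hadamard_conj l0 l1 z1 z2 z3)) ?L"
    using similar_real_normal_form_diag by (rule similar_mat_trans)
  then have "char_poly (map_mat complex_of_real (hadamard_conj l0 l1 z1 z2 z3)) = char_poly ?L"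
    by (rule char_poly_similar)
  also have "\<dots> = (\<Prod>x\<leftarrow>normal_form_spectrum l0 l1 z1 z2 z3. [:- x, 1:])"
    using char_poly_mat_diag[of "normal_form_spectrum l0 l1 z1 z2 z3"]
    by (simp only: length_normal_form_spectrum)
  finally show ?thesis
    unfolding has_eigenvalues_def normal_form_spectrum_def
    by (simp only: list.map prod_list.Cons prod_list.Nil mult_ac)
qed

theorem theorem3p12:
  fixes l0 l1 :: real and z1 z2 z3 :: complex
  assumes "l0 \<ge> 0" and "0 > l1"
    and "Im z1 > 0" and "Im z2 > 0" and "Im z3 > 0"
    and "l0 + l1 - 2 * (cmod z1 + cmod z2 + cmod z3) \<ge> 0"
  shows "\<exists>Q :: real mat. Q \<in> carrier_mat 8 8 \<and> normal_real_mat Q \<and> centrosymmetric Q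
            \<and> nonneg_mat Q
            \<and> has_eigenvalues Q [complex_of_real l0, complex_of_real l1, z1, z2, z3,
                                  cnj z1, cnj z2, cnj z3]"
proof -
  have "nonneg_mat (hadamard_conj l0 l1 z1 z2 z3)"
    using assms(2,6) by (intro hadamard_conj_nonneg) simp_all
  then show ?thesis
    by (intro exI[of _ "hadamard_conj l0 l1 z1 z2 z3"] conjI hadamard_conj_carrier
        hadamard_conj_normal hadamard_conj_centrosymmetric hadamard_conj_eigenvalues)
qed

end
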